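(* For $n=1,2,\dots$ let $\Phi_{W^{(n)}}$ be a source pmf on countable $\mathcal W^{(n)}$, $\Phi_{U^{(n)}|W^{(n)}}$ a codebook distribution on countable $\mathcal U^{(n)}$, and $\Phi_{V^{(n)}|W^{(n)},U^{(n)}}$ a channel to countable $\mathcal V^{(n)}$. Let $\mathcal B^{(n)}=\{u^{(n)}(w)\}_{w\in\mathcal W^{(n)}}$ have independent entries with $u^{(n)}(w)\sim\Phi_{U^{(n)}|W^{(n)}=w}$, let $P_{V^{(n)}}(v)=\sum_w\Phi_{W^{(n)}}(w)\Phi_{V^{(n)}|W^{(n)},U^{(n)}}(v|w,u^{(n)}(w))$, and let $Q_{V^{(n)}}=\Phi_{V^{(n)}}$ be the $V^{(n)}$-marginal of $\Phi_{W^{(n)}}\Phi_{U^{(n)}|W^{(n)}}\Phi_{V^{(n)}|W^{(n)},U^{(n)}}$. If for every $\tau\in\mathbb R$, $\mathbf P_\Phi\big(i_\Phi(W^{(n)},U^{(n)};V^{(n)})-i_\Phi(W^{(n)})>\tau\big)\to0$ as $n\to\infty$, then $\lim_{n\to\infty}\mathbf E\|P_{V^{(n)}}-Q_{V^{(n)}}\|_{TV}=0$.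
   Context: Expectation is over the random codebook. $i_\Phi(w,u;v)=\log\frac{\Phi_{V|W,U}(v|w,u)}{\Phi_V(v)}$ and $i_\Phi(w)=\log\frac1{\Phi_W(w)}$, base 2. Total variation is half the $\ell_1$ distance. *)

theory Defs
  imports "HOL-Probability.Probability"
begin

definition tv_dist :: "'a pmf \<Rightarrow> 'a pmf \<Rightarrow> real" where
  "tv_dist p q = (1/2) * (\<Sum>\<^sub>\<infinity> x. \<bar>pmf p x - pmf q x\<bar>)"

definition induced_out :: "'w pmf \<Rightarrow> ('w \<Rightarrow> 'u \<Rightarrow> 'v pmf) \<Rightarrow> ('w \<Rightarrow> 'u) \<Rightarrow> 'v pmf" where
  "induced_out PW ch c = bind_pmf PW (\<lambda>w. ch w (c w))"

definition joint_pmf :: "'w pmf \<Rightarrow> ('w \<Rightarrow> 'u pmf) \<Rightarrow> ('w \<Rightarrow> 'u \<Rightarrow> 'v pmf) \<Rightarrow> ('w \<times> 'u \<times> 'v) pmf" where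
  "joint_pmf PW PU ch = bind_pmf PW (\<lambda>w. bind_pmf (PU w) (\<lambda>u. map_pmf (\<lambda>v. (w, u, v)) (ch w u)))"

definition target_out :: "'w pmf \<Rightarrow> ('w \<Rightarrow> 'u pmf) \<Rightarrow> ('w \<Rightarrow> 'u \<Rightarrow> 'v pmf) \<Rightarrow> 'v pmf" where
  "target_out PW PU ch = map_pmf (\<lambda>(w, u, v). v) (joint_pmf PW PU ch)"

definition info_dens_cond :: "'w pmf \<Rightarrow> ('w \<Rightarrow> 'u pmf) \<Rightarrow> ('w \<Rightarrow> 'u \<Rightarrow> 'v pmf) \<Rightarrow> 'w \<Rightarrow> 'u \<Rightarrow> 'v \<Rightarrow> real" where
  "info_dens_cond PW PU ch w u v = log 2 (pmf (ch w u) v / pmf (target_out PW PU ch) v)"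

definition info_dens_src :: "'w pmf \<Rightarrow> 'w \<Rightarrow> real" where
  "info_dens_src PW w = log 2 (1 / pmf PW w)"

definition codebook_measure :: "('w \<Rightarrow> 'u pmf) \<Rightarrow> ('w \<Rightarrow> 'u) measure" where
  "codebook_measure PU = PiM UNIV (\<lambda>w. measure_pmf (PU w))"

end

theory Submission
  imports Defs
begin

(*
  For a fixed blocklength we prove a one-shot bound: for every threshold tau and every delta > 0,
     E_c TV(P_V[c], Q_V) <= P(i(W,U;V) - i(W) > tau) + 2 delta + sqrt (2^tau).
  Truncate the source to a finite set F of mass >= 1 - delta and the output to a finite set Vs of
  mass >= 1 - delta, and call (w,u,v) typical if Phi_W(w) Phi(v|w,u) <= 2^tau Q_V(v).  For each v the
  typical part of P_V[c](v) is a sum over w in F of independent terms bounded by 2^tau Q_V(v); its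
  mean m(v) <= Q_V(v), so its mean absolute deviation is at most sqrt(2^tau Q_V(v) m(v)) <= sqrt(2^tau) Q_V(v).
  Since TV(P, Q) is the total deficit sum_v (Q(v) - P(v))^+, it remains to note that the missing
  mass Q_V(v) - m(v), summed over Vs, is at most the mass outside F plus the probability of the
  atypical event.
*)

section \<open>Integrals over the random codebook reduce to finite product pmfs\<close>

lemma distr_Pi_pmf_restrict:
  fixes p :: "'i \<Rightarrow> 'a pmf"
  assumes fin: "finite I"
  shows "distr (measure_pmf (Pi_pmf I d p)) (PiM I (\<lambda>i. measure_pmf (p i))) (\<lambda>x. restrict x I)
         = PiM I (\<lambda>i. measure_pmf (p i))"
proof (rule product_sigma_finite.PiM_eqI)
  show "product_sigma_finite (\<lambda>i. measure_pmf (p i))"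
    by (simp add: product_sigma_finite.intro measure_pmf.sigma_finite_measure_axioms)
next
  fix A assume A: "\<And>i. i \<in> I \<Longrightarrow> A i \<in> sets (measure_pmf (p i))"
  have "Pi\<^sub>E I A \<in> sets (Pi\<^sub>M I (\<lambda>i. measure_pmf (p i)))"
    using A by (intro sets_PiM_I_finite fin) auto
  hence "emeasure (distr (measure_pmf (Pi_pmf I d p)) (Pi\<^sub>M I (\<lambda>i. measure_pmf (p i)))
          (\<lambda>x. restrict x I)) (Pi\<^sub>E I A) =
         emeasure (measure_pmf (Pi_pmf I d p)) ((\<lambda>x. restrict x I) -` Pi\<^sub>E I A)"
    by (subst emeasure_distr) (auto simp: space_PiM)
  also have "\<dots> = emeasure (measure_pmf (Pi_pmf I d p)) (PiE_dflt I d A)"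
    by (intro emeasure_eq_AE AE_pmfI) (auto simp: PiE_dflt_def set_Pi_pmf fin)
  also have "\<dots> = (\<Prod>i\<in>I. emeasure (measure_pmf (p i)) (A i))"
    by (simp add: measure_pmf.emeasure_eq_measure measure_Pi_pmf_PiE_dflt fin prod_ennreal)
  finally show "emeasure (distr (measure_pmf (Pi_pmf I d p)) (Pi\<^sub>M I (\<lambda>i. measure_pmf (p i)))
          (\<lambda>x. restrict x I)) (Pi\<^sub>E I A) = (\<Prod>i\<in>I. emeasure (measure_pmf (p i)) (A i))" .
qed (use fin in simp_all)

lemma nn_integral_PiM_restrict_Pi_pmf:
  fixes p :: "'i \<Rightarrow> 'a pmf" and G :: "('i \<Rightarrow> 'a) \<Rightarrow> ennreal"
  assumes fin: "finite I"
    and G: "G \<in> borel_measurable (PiM I (\<lambda>i. measure_pmf (p i)))"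
  shows "(\<integral>\<^sup>+ c. G (restrict c I) \<partial>PiM UNIV (\<lambda>i. measure_pmf (p i)))
       = (\<integral>\<^sup>+ x. G (restrict x I) \<partial>measure_pmf (Pi_pmf I d p))"
proof -
  interpret product_prob_space "\<lambda>i. measure_pmf (p i)" UNIV
    by (simp add: product_prob_space_def product_prob_space_axioms_def product_sigma_finite_def
        measure_pmf.sigma_finite_measure_axioms measure_pmf.prob_space_axioms)
  have r1: "(\<lambda>x. restrict x I) \<in> measurable (PiM UNIV (\<lambda>i. measure_pmf (p i))) (PiM I (\<lambda>i. measure_pmf (p i)))"
    by (rule measurable_restrict_subset) simp
  have r2: "(\<lambda>x. restrict x I) \<in> measurable (measure_pmf (Pi_pmf I d p)) (PiM I (\<lambda>i. measure_pmf (p i)))"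
    by (simp add: space_PiM)
  have "(\<integral>\<^sup>+ c. G (restrict c I) \<partial>PiM UNIV (\<lambda>i. measure_pmf (p i)))
     = (\<integral>\<^sup>+ y. G y \<partial>distr (PiM UNIV (\<lambda>i. measure_pmf (p i))) (PiM I (\<lambda>i. measure_pmf (p i))) (\<lambda>x. restrict x I))"
    using G by (subst nn_integral_distr[OF r1]) auto
  also have "\<dots> = (\<integral>\<^sup>+ y. G y \<partial>PiM I (\<lambda>i. measure_pmf (p i)))"
    using distr_PiM_restrict_finite[OF fin] by simp
  also have "\<dots> = (\<integral>\<^sup>+ y. G y \<partial>distr (measure_pmf (Pi_pmf I d p)) (PiM I (\<lambda>i. measure_pmf (p i))) (\<lambda>x. restrict x I))"
    by (simp only: distr_Pi_pmf_restrict[OF fin, of d p])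
  also have "\<dots> = (\<integral>\<^sup>+ x. G (restrict x I) \<partial>measure_pmf (Pi_pmf I d p))"
    using G by (subst nn_integral_distr[OF r2]) auto
  finally show ?thesis .
qed

lemma borel_measurable_abs_coordinate_sum:
  fixes a :: "'i \<Rightarrow> 'a \<Rightarrow> real" and p :: "'i \<Rightarrow> 'a pmf"
  assumes "F \<subseteq> I"
  shows "(\<lambda>c. ennreal \<bar>(\<Sum>w\<in>F. a w (c w)) - m\<bar>) \<in> borel_measurable (PiM I (\<lambda>w. measure_pmf (p w)))"
proof -
  have "(\<lambda>c. a w (c w)) \<in> borel_measurable (PiM I (\<lambda>w. measure_pmf (p w)))" if "w \<in> F" for w
    using that assms by (intro measurable_compose[OF measurable_component_singleton]) auto
  then show ?thesis
    by (intro measurable_compose[OF _ measurable_ennreal] borel_measurable_abs borel_measurable_diff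
        borel_measurable_sum borel_measurable_const)
qed

lemma prob_space_codebook: "prob_space (codebook_measure PU)"
proof -
  interpret product_prob_space "\<lambda>w. measure_pmf (PU w)" UNIV
    by (simp add: product_prob_space_def product_prob_space_axioms_def product_sigma_finite_def
        measure_pmf.sigma_finite_measure_axioms measure_pmf.prob_space_axioms)
  show ?thesis unfolding codebook_measure_def by (rule P.prob_space_axioms)
qed

section \<open>Mean deviation of a sum of independent bounded variables\<close>

lemma integrable_pmf_bounded:
  fixes f :: "'a \<Rightarrow> real"
  assumes "\<And>x. \<bar>f x\<bar> \<le> B"
  shows "integrable (measure_pmf M) f"
  by (rule measure_pmf.integrable_const_bound[where B=B]) (use assms in auto)

lemma expectation_abs_le_sqrt_second_moment:
  fixes Y :: "'a \<Rightarrow> real"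
  assumes "\<And>x. \<bar>Y x\<bar> \<le> B"
  shows "measure_pmf.expectation M (\<lambda>x. \<bar>Y x\<bar>) \<le> sqrt (measure_pmf.expectation M (\<lambda>x. (Y x)^2))"
proof -
  have i1: "integrable (measure_pmf M) (\<lambda>x. \<bar>Y x\<bar>)"
    by (rule integrable_pmf_bounded[where B=B]) (use assms in auto)
  have i2: "integrable (measure_pmf M) (\<lambda>x. \<bar>Y x\<bar>^2)"
    by (rule integrable_pmf_bounded[where B="B^2"])
       (metis assms abs_ge_zero abs_of_nonneg power2_abs power_mono zero_le_power2)
  have "0 \<le> measure_pmf.variance M (\<lambda>x. \<bar>Y x\<bar>)"
    by (rule measure_pmf.variance_positive)
  also have "\<dots> = measure_pmf.expectation M (\<lambda>x. (Y x)^2) - (measure_pmf.expectation M (\<lambda>x. \<bar>Y x\<bar>))^2"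
    using measure_pmf.variance_eq[OF i1 i2] by simp
  finally have "(measure_pmf.expectation M (\<lambda>x. \<bar>Y x\<bar>))^2 \<le> measure_pmf.expectation M (\<lambda>x. (Y x)^2)"
    by simp
  moreover have "0 \<le> measure_pmf.expectation M (\<lambda>x. \<bar>Y x\<bar>)"
    by (rule Bochner_Integration.integral_nonneg) auto
  ultimately show ?thesis
    by (metis real_sqrt_abs real_sqrt_le_mono abs_of_nonneg)
qed

lemma expectation_Pi_pmf_component:
  fixes g :: "'a \<Rightarrow> real"
  assumes "finite F" "w \<in> F"
  shows "measure_pmf.expectation (Pi_pmf F d p) (\<lambda>x. g (x w)) = measure_pmf.expectation (p w) g"
proof -
  have "p w = map_pmf (\<lambda>f. f w) (Pi_pmf F d p)" using assms by (simp add: Pi_pmf_component)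
  then show ?thesis by simp
qed

lemma prod_two_factors:
  fixes g h :: "'i \<Rightarrow> 'b::comm_monoid_mult"
  assumes "finite F" "w \<in> F" "w' \<in> F" "w \<noteq> w'"
  shows "(\<Prod>z\<in>F. if z = w then g z else if z = w' then h z else 1) = g w * h w'"
proof -
  have "(\<Prod>z\<in>F. if z = w then g z else if z = w' then h z else 1)
     = (\<Prod>z\<in>{w,w'}. if z = w then g z else if z = w' then h z else 1)"
    by (rule prod.mono_neutral_right) (use assms in auto)
  also have "\<dots> = g w * h w'" using assms by simp
  finally show ?thesis .
qed

lemma expectation_Pi_pmf_pair:
  fixes g h :: "'a \<Rightarrow> real"
  assumes fin: "finite F" and w: "w \<in> F" "w' \<in> F" "w \<noteq> w'"
    and g: "\<And>v. 0 \<le> g v" "\<And>v. g v \<le> B" and h: "\<And>v. 0 \<le> h v" "\<And>v. h v \<le> B"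
  shows "measure_pmf.expectation (Pi_pmf F d p) (\<lambda>x. g (x w) * h (x w'))
       = measure_pmf.expectation (p w) g * measure_pmf.expectation (p w') h"
proof -
  define f where "f = (\<lambda>z v. if z = w then g v else if z = w' then h v else 1)"
  have f_bounded: "0 \<le> f z v" "f z v \<le> B + 1" for z v
    using g h order_trans[OF g(1) g(2)] by (auto simp: f_def intro: add_increasing2)
  have "measure_pmf.expectation (Pi_pmf F d p) (\<lambda>y. \<Prod>z\<in>F. f z (y z)) =
        (\<Prod>z\<in>F. measure_pmf.expectation (p z) (f z))"
    using f_bounded
    by (intro expectation_prod_Pi_pmf[OF fin] integrable_pmf_bounded[where B="B+1"]) (auto simp: abs_le_iff)
  also have "(\<lambda>y. \<Prod>z\<in>F. f z (y z)) = (\<lambda>x. g (x w) * h (x w'))"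
    using prod_two_factors[OF fin w, where g = "\<lambda>z. g (_ z)"] by (auto simp: f_def)
  also have "(\<Prod>z\<in>F. measure_pmf.expectation (p z) (f z))
     = (\<Prod>z\<in>F. if z = w then measure_pmf.expectation (p z) g
               else if z = w' then measure_pmf.expectation (p z) h else 1)"
    by (rule prod.cong) (auto simp: f_def)
  also have "\<dots> = measure_pmf.expectation (p w) g * measure_pmf.expectation (p w') h"
    by (rule prod_two_factors[OF fin w])
  finally show ?thesis .
qed

text \<open>Second moment of a sum of independent variables with values in \<open>[0, K]\<close>: the variance is
  at most \<open>K\<close> times the mean, since \<open>E a\<^sup>2 \<le> K E a\<close> for each summand.\<close>
lemma second_moment_sum_Pi_pmf:
  fixes a :: "'i \<Rightarrow> 'a \<Rightarrow> real" and p :: "'i \<Rightarrow> 'a pmf"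
  assumes fin: "finite F" and a0: "\<And>w u. 0 \<le> a w u" and aK: "\<And>w u. a w u \<le> K"
  defines "m \<equiv> \<Sum>w\<in>F. measure_pmf.expectation (p w) (a w)"
  shows "measure_pmf.expectation (Pi_pmf F d p) (\<lambda>x. (\<Sum>w\<in>F. a w (x w))^2) \<le> K * m + m^2"
proof -
  define P where "P = Pi_pmf F d p"
  define E where "E = (\<lambda>w. measure_pmf.expectation (p w) (a w))"
  have E0: "0 \<le> E w" for w
    unfolding E_def by (rule Bochner_Integration.integral_nonneg) (use a0 in auto)
  have product_integrable: "integrable (measure_pmf P) (\<lambda>x. a w (x w) * a w' (x w'))" for w w'
  proof (rule integrable_pmf_bounded[where B="K*K"])
    fix x show "\<bar>a w (x w) * a w' (x w')\<bar> \<le> K * K"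
      using a0[of w "x w"] a0[of w' "x w'"] aK[of w "x w"] aK[of w' "x w'"]
      by (simp add: abs_mult mult_mono)
  qed
  have product_bound: "measure_pmf.expectation P (\<lambda>x. a w (x w) * a w' (x w'))
      \<le> (if w = w' then K * E w else 0) + E w * E w'" if "w \<in> F" "w' \<in> F" for w w'
  proof (cases "w = w'")
    case True
    have "measure_pmf.expectation P (\<lambda>x. a w (x w) * a w' (x w'))
        = measure_pmf.expectation (p w) (\<lambda>u. a w u * a w u)"
      unfolding P_def True by (rule expectation_Pi_pmf_component[OF fin that(2)])
    also have "\<dots> \<le> measure_pmf.expectation (p w) (\<lambda>u. K * a w u)"
    proof (rule Bochner_Integration.integral_mono)
      have sq: "\<bar>a w u * a w u\<bar> \<le> K * K" and lin: "\<bar>K * a w u\<bar> \<le> K * K" for u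
        using a0[of w u] aK[of w u] order_trans[OF a0 aK] by (simp_all add: abs_mult mult_mono)
      show "integrable (measure_pmf (p w)) (\<lambda>u. a w u * a w u)"
        by (rule integrable_pmf_bounded[OF sq])
      show "integrable (measure_pmf (p w)) (\<lambda>u. K * a w u)"
        by (rule integrable_pmf_bounded[OF lin])
      show "a w u * a w u \<le> K * a w u" for u by (rule mult_right_mono[OF aK a0])
    qed
    also have "\<dots> = K * E w" unfolding E_def by simp
    finally show ?thesis using True E0[of w'] by (simp add: add_increasing2)
  next
    case False
    have "measure_pmf.expectation P (\<lambda>x. a w (x w) * a w' (x w')) = E w * E w'"
      unfolding P_def E_def by (rule expectation_Pi_pmf_pair[OF fin that False, where B=K]) (auto intro: a0 aK)
    then show ?thesis using False by simp
  qed
  have "measure_pmf.expectation P (\<lambda>x. (\<Sum>w\<in>F. a w (x w))^2)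
      = measure_pmf.expectation P (\<lambda>x. \<Sum>w\<in>F. \<Sum>w'\<in>F. a w (x w) * a w' (x w'))"
    unfolding power2_eq_square sum_product ..
  also have "\<dots> = (\<Sum>w\<in>F. \<Sum>w'\<in>F. measure_pmf.expectation P (\<lambda>x. a w (x w) * a w' (x w')))"
    using product_integrable by (simp add: Bochner_Integration.integral_sum Bochner_Integration.integrable_sum)
  also have "\<dots> \<le> (\<Sum>w\<in>F. \<Sum>w'\<in>F. (if w = w' then K * E w else 0) + E w * E w')"
    by (intro sum_mono product_bound)
  also have "\<dots> = K * m + m^2"
    using fin by (simp add: sum.distrib m_def E_def sum_distrib_left sum_distrib_right power2_eq_square
        sum_product mult.commute)
  finally show ?thesis unfolding P_def .
qed

lemma mean_deviation_sum_Pi_pmf: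
  fixes a :: "'i \<Rightarrow> 'a \<Rightarrow> real" and p :: "'i \<Rightarrow> 'a pmf"
  assumes fin: "finite F" and a0: "\<And>w u. 0 \<le> a w u" and aK: "\<And>w u. a w u \<le> K"
  defines "m \<equiv> \<Sum>w\<in>F. measure_pmf.expectation (p w) (a w)"
  shows "measure_pmf.expectation (Pi_pmf F d p) (\<lambda>x. \<bar>(\<Sum>w\<in>F. a w (x w)) - m\<bar>) \<le> sqrt (K * m)"
proof -
  define P where "P = Pi_pmf F d p"
  define X where "X = (\<lambda>x. \<Sum>w\<in>F. a w (x w))"
  define B where "B = real (card F) * K"
  have X_bounds: "0 \<le> X x" "X x \<le> B" for x
    unfolding X_def B_def using sum_bounded_above[of F "\<lambda>w. a w (x w)" K] aK
    by (auto intro: sum_nonneg a0)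
  have m0: "0 \<le> m"
    unfolding m_def by (intro sum_nonneg Bochner_Integration.integral_nonneg a0)
  have mean: "measure_pmf.expectation P X = m"
    unfolding X_def P_def m_def using a0 aK
    by (subst Bochner_Integration.integral_sum)
       (auto intro!: sum.cong expectation_Pi_pmf_component fin integrable_pmf_bounded[where B=K])
  have iX: "integrable (measure_pmf P) X"
    by (rule integrable_pmf_bounded[where B=B]) (use X_bounds in auto)
  have iX2: "integrable (measure_pmf P) (\<lambda>x. (X x)^2)"
    by (rule integrable_pmf_bounded[where B="B^2"]) (use X_bounds in \<open>auto intro: power_mono\<close>)
  have "measure_pmf.expectation P (\<lambda>x. \<bar>X x - m\<bar>) \<le> sqrt (measure_pmf.expectation P (\<lambda>x. (X x - m)^2))"
  proof (rule expectation_abs_le_sqrt_second_moment)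
    show "\<bar>X x - m\<bar> \<le> B + m" for x
      unfolding abs_le_iff using X_bounds[of x] m0 by linarith
  qed
  also have "measure_pmf.expectation P (\<lambda>x. (X x - m)^2) = measure_pmf.expectation P (\<lambda>x. (X x)^2) - m^2"
    using measure_pmf.variance_eq[OF iX iX2] mean by simp
  also have "sqrt (\<dots>) \<le> sqrt (K * m)"
  proof -
    have "measure_pmf.expectation P (\<lambda>x. (X x)^2) \<le> K * m + m^2"
      unfolding P_def X_def m_def by (rule second_moment_sum_Pi_pmf) (use a0 aK fin in auto)
    then show ?thesis by simp
  qed
  finally show ?thesis unfolding P_def X_def .
qed

lemma mean_deviation_sum_codebook:
  fixes a :: "'w \<Rightarrow> 'u \<Rightarrow> real" and PU :: "'w \<Rightarrow> 'u pmf"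
  assumes fin: "finite F" and a0: "\<And>w u. 0 \<le> a w u" and aK: "\<And>w u. a w u \<le> K"
  defines "m \<equiv> \<Sum>w\<in>F. measure_pmf.expectation (PU w) (a w)"
  shows "(\<integral>\<^sup>+ c. ennreal \<bar>(\<Sum>w\<in>F. a w (c w)) - m\<bar> \<partial>codebook_measure PU) \<le> ennreal (sqrt (K * m))"
proof -
  define G where "G = (\<lambda>c. ennreal \<bar>(\<Sum>w\<in>F. a w (c w)) - m\<bar>)"
  have G_restrict: "G (restrict c F) = G c" for c unfolding G_def by (simp add: restrict_def)
  have bounded: "\<bar>\<bar>(\<Sum>w\<in>F. a w (x w)) - m\<bar>\<bar> \<le> real (card F) * K + \<bar>m\<bar>" for x
    using sum_bounded_above[of F "\<lambda>w. a w (x w)" K] aK sum_nonneg[of F "\<lambda>w. a w (x w)"] a0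
    by (auto simp: abs_le_iff)
  have "(\<integral>\<^sup>+ c. G c \<partial>codebook_measure PU) = (\<integral>\<^sup>+ c. G (restrict c F) \<partial>codebook_measure PU)"
    by (simp add: G_restrict)
  also have "\<dots> = (\<integral>\<^sup>+ x. G (restrict x F) \<partial>measure_pmf (Pi_pmf F undefined PU))"
    unfolding codebook_measure_def G_def
    by (rule nn_integral_PiM_restrict_Pi_pmf[OF fin borel_measurable_abs_coordinate_sum]) simp
  also have "\<dots> = (\<integral>\<^sup>+ x. G x \<partial>measure_pmf (Pi_pmf F undefined PU))"
    by (simp only: G_restrict)
  also have "\<dots> = ennreal (measure_pmf.expectation (Pi_pmf F undefined PU) (\<lambda>x. \<bar>(\<Sum>w\<in>F. a w (x w)) - m\<bar>))"
    unfolding G_def using bounded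
    by (intro nn_integral_eq_integral integrable_pmf_bounded) auto
  also have "\<dots> \<le> ennreal (sqrt (K * m))"
    unfolding m_def by (rule ennreal_leI, rule mean_deviation_sum_Pi_pmf[OF fin a0 aK])
  finally show ?thesis unfolding G_def .
qed

section \<open>Total variation through the deficit on a finite set\<close>

lemma summable_on_pmf: "pmf p summable_on A"
proof -
  have "Infinite_Sum.abs_summable_on (pmf p) A"
    using abs_summable_equivalent pmf_abs_summable by blast
  then show ?thesis by (simp add: abs_summable_summable)
qed

lemma infsum_pmf: "infsum (pmf p) A = measure_pmf.prob p A"
  by (simp add: measure_pmf_conv_infsetsum infsetsum_infsum pmf_abs_summable)

text \<open>Since both pmfs have total mass one, the total variation distance equals the total
  deficit of \<open>p\<close> against \<open>q\<close>.\<close>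
lemma tv_dist_eq_deficit: "tv_dist p q = (\<Sum>\<^sub>\<infinity> v. max 0 (pmf q v - pmf p v))"
proof -
  define h where "h = (\<lambda>v. max 0 (pmf q v - pmf p v))"
  have sp: "pmf p summable_on UNIV" and sq: "pmf q summable_on UNIV" by (rule summable_on_pmf)+
  have sh: "h summable_on UNIV"
    by (rule summable_on_comparison_test[OF sq]) (auto simp: h_def)
  have sd: "(\<lambda>v. pmf p v - pmf q v) summable_on UNIV"
    using summable_on_add[OF sp summable_on_cmult_right[OF sq, of "-1"]] by simp
  have "(\<Sum>\<^sub>\<infinity> v. pmf p v + (-1) * pmf q v) = (\<Sum>\<^sub>\<infinity> v. pmf p v) + (\<Sum>\<^sub>\<infinity> v. (-1) * pmf q v)"
    by (rule infsum_add[OF sp summable_on_cmult_right[OF sq]])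
  also have "\<dots> = 0"
    using infsum_cmult_right[OF sq, of "-1"] by (simp add: infsum_pmf del: mult_minus_left mult_1)
  finally have balance: "(\<Sum>\<^sub>\<infinity> v. pmf p v - pmf q v) = 0" by simp
  have "(\<Sum>\<^sub>\<infinity> v. \<bar>pmf p v - pmf q v\<bar>) = (\<Sum>\<^sub>\<infinity> v. (pmf p v - pmf q v) + 2 * h v)"
    by (rule infsum_cong) (auto simp: h_def abs_if max_def)
  also have "\<dots> = 2 * (\<Sum>\<^sub>\<infinity> v. h v)"
    using infsum_add[OF sd summable_on_cmult_right[OF sh]] balance infsum_cmult_right[OF sh] by simp
  finally show ?thesis unfolding tv_dist_def h_def by simp
qed

lemma tv_dist_le_finite_deficit:
  fixes p q :: "'a pmf"
  assumes fin: "finite Vs"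
  shows "tv_dist p q \<le> (\<Sum>v\<in>Vs. max 0 (pmf q v - pmf p v)) + measure_pmf.prob q (- Vs)"
proof -
  define h where "h = (\<lambda>v. max 0 (pmf q v - pmf p v))"
  have sq: "pmf q summable_on A" for A by (rule summable_on_pmf)
  have sh: "h summable_on A" for A
    by (rule summable_on_comparison_test[OF sq]) (auto simp: h_def)
  have "tv_dist p q = infsum h Vs + infsum h (- Vs)"
    unfolding tv_dist_eq_deficit h_def[symmetric]
    using infsum_Un_disjoint[OF sh sh, of Vs "- Vs"] by (simp add: Un_commute)
  also have "infsum h (- Vs) \<le> infsum (pmf q) (- Vs)"
    by (rule infsum_mono[OF sh sq]) (auto simp: h_def)
  finally show ?thesis using fin by (simp add: h_def infsum_pmf)
qed

lemma finite_set_large_mass: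
  fixes M :: "'a pmf"
  assumes "0 < \<delta>"
  obtains F where "finite F" "measure_pmf.prob M (- F) \<le> \<delta>"
proof -
  obtain F where F: "finite F" "dist (sum (pmf M) F) (infsum (pmf M) UNIV) \<le> \<delta>"
    using infsum_finite_approximation[OF summable_on_pmf[of M UNIV] assms] by blast
  have "infsum (pmf M) UNIV = 1" by (simp add: infsum_pmf)
  moreover have "sum (pmf M) F = measure_pmf.prob M F"
    using F(1) by (simp add: measure_measure_pmf_finite)
  moreover have "measure_pmf.prob M (- F) = 1 - measure_pmf.prob M F"
    using measure_pmf.prob_compl[of F M] by (simp add: Compl_eq_Diff_UNIV)
  ultimately have "measure_pmf.prob M (- F) \<le> \<delta>" using F(2) by (simp add: dist_real_def)
  with F(1) show ?thesis by (rule that)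
qed

lemma emeasure_joint_pmf_slice:
  "emeasure (joint_pmf PW PU ch) {(w, u, v'). v' = v \<and> R w u} =
   (\<integral>\<^sup>+ w. \<integral>\<^sup>+ u. ennreal (if R w u then pmf (ch w u) v else 0) \<partial>PU w \<partial>PW)"
proof -
  have "emeasure (ch w u) {v'. v' = v \<and> R w u} = ennreal (if R w u then pmf (ch w u) v else 0)" for w u
    by (cases "R w u") (auto simp: emeasure_pmf_single)
  then show ?thesis unfolding joint_pmf_def by (simp add: vimage_def)
qed

lemma pmf_target_out: "pmf (target_out PW PU ch) v = measure_pmf.prob (joint_pmf PW PU ch) {(w, u, v'). v' = v}"
  unfolding target_out_def pmf_map by (rule arg_cong[where f="measure_pmf.prob _"]) auto

lemma map_fst_joint_pmf: "map_pmf fst (joint_pmf PW PU ch) = PW"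
  unfolding joint_pmf_def map_bind_pmf by (simp add: pmf.map_comp o_def bind_return_pmf')

lemma pmf_induced_out: "ennreal (pmf (induced_out PW ch c) v) = (\<integral>\<^sup>+ w. ennreal (pmf (ch w (c w)) v) \<partial>PW)"
  unfolding induced_out_def by (simp flip: emeasure_pmf_single)

lemma nn_integral_pmf_finite_support:
  fixes g :: "'a \<Rightarrow> ennreal"
  assumes "finite F"
  shows "(\<integral>\<^sup>+ w. (if w \<in> F then g w else 0) \<partial>measure_pmf PW) = (\<Sum>w\<in>F. g w * pmf PW w)"
  by (subst nn_integral_measure_pmf_support[OF assms]) auto

lemma log_ratio_gt:
  fixes pw c q \<tau> :: real
  assumes "0 < pw" "0 < c" "0 < q" "2 powr \<tau> * q < pw * c"
  shows "\<tau> < log 2 (c / q) - log 2 (1 / pw)"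
proof -
  have "log 2 (c / q) - log 2 (1 / pw) = log 2 ((c / q) / (1 / pw))"
    using assms by (simp add: log_divide_pos log_mult)
  also have "(c / q) / (1 / pw) = pw * c / q" by simp
  finally have "log 2 (c / q) - log 2 (1 / pw) = log 2 (pw * c / q)" .
  moreover have "2 powr \<tau> < pw * c / q" using assms by (simp add: pos_less_divide_eq)
  then have "\<tau> < log 2 (pw * c / q)"
    using assms by (subst less_log_iff) auto
  ultimately show ?thesis by simp
qed

section \<open>One-shot soft-covering bound\<close>

context
  fixes PW :: "'w pmf" and PU :: "'w \<Rightarrow> 'u pmf" and ch :: "'w \<Rightarrow> 'u \<Rightarrow> 'v pmf"
begin

text \<open>A triple is typical at level \<open>\<kappa>\<close> if its joint weight \<open>\<Phi>_W(w) \<Phi>(v|w,u)\<close> is at most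
  \<open>\<kappa>\<close> times the target probability \<open>Q_V(v)\<close>; atypical triples at level \<open>2\<^sup>\<tau>\<close> have information
  density above \<open>\<tau>\<close>.\<close>
definition typical :: "real \<Rightarrow> 'w \<Rightarrow> 'u \<Rightarrow> 'v \<Rightarrow> bool" where
  "typical \<kappa> w u v \<longleftrightarrow> pmf PW w * pmf (ch w u) v \<le> \<kappa> * pmf (target_out PW PU ch) v"

definition typical_weight :: "real \<Rightarrow> 'v \<Rightarrow> 'w \<Rightarrow> 'u \<Rightarrow> real" where
  "typical_weight \<kappa> v w u = (if typical \<kappa> w u v then pmf PW w * pmf (ch w u) v else 0)"

definition trunc_out :: "'w set \<Rightarrow> real \<Rightarrow> 'v \<Rightarrow> ('w \<Rightarrow> 'u) \<Rightarrow> real" where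
  "trunc_out F \<kappa> v c = (\<Sum>w\<in>F. typical_weight \<kappa> v w (c w))"

definition trunc_mean :: "'w set \<Rightarrow> real \<Rightarrow> 'v \<Rightarrow> real" where
  "trunc_mean F \<kappa> v = (\<Sum>w\<in>F. measure_pmf.expectation (PU w) (typical_weight \<kappa> v w))"

definition atypical_event :: "'w set \<Rightarrow> real \<Rightarrow> 'v \<Rightarrow> ('w \<times> 'u \<times> 'v) set" where
  "atypical_event F \<kappa> v = {(w, u, v'). v' = v \<and> \<not> (w \<in> F \<and> typical \<kappa> w u v)}"

lemma typical_weight_nonneg: "0 \<le> typical_weight \<kappa> v w u"
  by (simp add: typical_weight_def)

lemma typical_weight_le: "0 \<le> \<kappa> \<Longrightarrow> typical_weight \<kappa> v w u \<le> \<kappa> * pmf (target_out PW PU ch) v"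
  by (simp add: typical_weight_def typical_def)

lemma trunc_mean_nonneg: "0 \<le> trunc_mean F \<kappa> v"
  unfolding trunc_mean_def
  by (intro sum_nonneg Bochner_Integration.integral_nonneg typical_weight_nonneg)

lemma typical_weight_le_1: "typical_weight \<kappa> v w u \<le> 1"
  by (simp add: typical_weight_def mult_le_one pmf_le_1)

lemma info_density_gt_if_atypical:
  assumes J: "(w, u, v) \<in> set_pmf (joint_pmf PW PU ch)" and atyp: "\<not> typical (2 powr \<tau>) w u v"
  shows "\<tau> < info_dens_cond PW PU ch w u v - info_dens_src PW w"
proof -
  have "w \<in> set_pmf PW" "v \<in> set_pmf (ch w u)"
    using J unfolding joint_pmf_def by auto
  moreover have "v \<in> set_pmf (target_out PW PU ch)"
    using J unfolding target_out_def by force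
  ultimately have "0 < pmf PW w" "0 < pmf (ch w u) v" "0 < pmf (target_out PW PU ch) v"
    by (auto simp: pmf_positive)
  from log_ratio_gt[OF this] atyp show ?thesis
    unfolding info_dens_cond_def info_dens_src_def typical_def by simp
qed

lemma expectation_typical_weight:
  "ennreal (measure_pmf.expectation (PU w) (typical_weight \<kappa> v w)) =
   (\<integral>\<^sup>+ u. ennreal (if typical \<kappa> w u v then pmf (ch w u) v else 0) \<partial>PU w) * ennreal (pmf PW w)"
proof -
  have "ennreal (measure_pmf.expectation (PU w) (typical_weight \<kappa> v w))
      = (\<integral>\<^sup>+ u. ennreal (typical_weight \<kappa> v w u) \<partial>PU w)"
    using typical_weight_nonneg typical_weight_le_1
    by (intro nn_integral_eq_integral[symmetric] integrable_pmf_bounded[where B=1]) auto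
  also have "\<dots> = (\<integral>\<^sup>+ u. ennreal (if typical \<kappa> w u v then pmf (ch w u) v else 0) * ennreal (pmf PW w) \<partial>PU w)"
    by (rule nn_integral_cong) (auto simp: typical_weight_def ennreal_mult' mult.commute)
  also have "\<dots> = (\<integral>\<^sup>+ u. ennreal (if typical \<kappa> w u v then pmf (ch w u) v else 0) \<partial>PU w) * ennreal (pmf PW w)"
    by (rule nn_integral_multc) simp
  finally show ?thesis .
qed

lemma trunc_mean_eq:
  assumes "finite F"
  shows "trunc_mean F \<kappa> v =
    measure_pmf.prob (joint_pmf PW PU ch) {(w, u, v'). v' = v \<and> w \<in> F \<and> typical \<kappa> w u v}"
proof -
  let ?S = "{(w, u, v'). v' = v \<and> w \<in> F \<and> typical \<kappa> w u v}"
  have "ennreal (measure_pmf.prob (joint_pmf PW PU ch) ?S) = emeasure (joint_pmf PW PU ch) ?S"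
    by (simp add: measure_pmf.emeasure_eq_measure)
  also have "\<dots> = (\<integral>\<^sup>+ w. \<integral>\<^sup>+ u. ennreal (if w \<in> F \<and> typical \<kappa> w u v then pmf (ch w u) v else 0) \<partial>PU w \<partial>PW)"
    by (rule emeasure_joint_pmf_slice)
  also have "\<dots> = (\<integral>\<^sup>+ w. (if w \<in> F then \<integral>\<^sup>+ u. ennreal (if typical \<kappa> w u v then pmf (ch w u) v else 0) \<partial>PU w else 0) \<partial>PW)"
    by (rule nn_integral_cong) auto
  also have "\<dots> = (\<Sum>w\<in>F. (\<integral>\<^sup>+ u. ennreal (if typical \<kappa> w u v then pmf (ch w u) v else 0) \<partial>PU w) * pmf PW w)"
    by (rule nn_integral_pmf_finite_support[OF assms])
  also have "\<dots> = (\<Sum>w\<in>F. ennreal (measure_pmf.expectation (PU w) (typical_weight \<kappa> v w)))"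
    by (simp only: expectation_typical_weight)
  also have "\<dots> = ennreal (trunc_mean F \<kappa> v)"
    unfolding trunc_mean_def
    by (rule sum_ennreal) (auto intro!: Bochner_Integration.integral_nonneg simp: typical_weight_nonneg)
  finally show ?thesis
    using trunc_mean_nonneg[of F \<kappa> v] by (simp add: ennreal_inj)
qed

lemma pmf_target_out_split:
  assumes "finite F"
  shows "pmf (target_out PW PU ch) v = trunc_mean F \<kappa> v + measure_pmf.prob (joint_pmf PW PU ch) (atypical_event F \<kappa> v)"
proof -
  have "{(w, u, v'). v' = v} = {(w, u, v'). v' = v \<and> w \<in> F \<and> typical \<kappa> w u v} \<union> atypical_event F \<kappa> v"
    by (auto simp: atypical_event_def)
  then have "pmf (target_out PW PU ch) v = measure_pmf.prob (joint_pmf PW PU ch)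
      ({(w, u, v'). v' = v \<and> w \<in> F \<and> typical \<kappa> w u v} \<union> atypical_event F \<kappa> v)"
    by (simp add: pmf_target_out)
  also have "\<dots> = trunc_mean F \<kappa> v + measure_pmf.prob (joint_pmf PW PU ch) (atypical_event F \<kappa> v)"
    by (subst measure_pmf.finite_measure_Union)
       (auto simp: atypical_event_def trunc_mean_eq[OF assms])
  finally show ?thesis .
qed

lemma atypical_mass_le:
  assumes "finite Vs"
  shows "(\<Sum>v\<in>Vs. measure_pmf.prob (joint_pmf PW PU ch) (atypical_event F (2 powr \<tau>) v))
    \<le> measure_pmf.prob PW (- F) + measure_pmf.prob (joint_pmf PW PU ch)
         {(w, u, v). info_dens_cond PW PU ch w u v - info_dens_src PW w > \<tau>}"
proof -
  define J where "J = joint_pmf PW PU ch"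
  define A where "A = {(w, u, v). \<not> typical (2 powr \<tau>) w u v}"
  have "(\<Sum>v\<in>Vs. measure_pmf.prob J (atypical_event F (2 powr \<tau>) v))
      = measure_pmf.prob J (\<Union>v\<in>Vs. atypical_event F (2 powr \<tau>) v)"
    by (rule measure_pmf.finite_measure_finite_Union[symmetric])
       (auto simp: assms atypical_event_def disjoint_family_on_def)
  also have "\<dots> \<le> measure_pmf.prob J ({x. fst x \<notin> F} \<union> A)"
    by (rule measure_pmf.finite_measure_mono) (auto simp: atypical_event_def A_def)
  also have "\<dots> \<le> measure_pmf.prob J {x. fst x \<notin> F} + measure_pmf.prob J A"
    by (rule measure_subadditive) (auto simp: measure_pmf.emeasure_eq_measure)
  also have "measure_pmf.prob J {x. fst x \<notin> F} = measure_pmf.prob (map_pmf fst J) (- F)"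
    by (simp add: vimage_def)
  also have "\<dots> = measure_pmf.prob PW (- F)"
    unfolding J_def map_fst_joint_pmf ..
  also have "measure_pmf.prob J A = measure_pmf.prob J (A \<inter> set_pmf J)"
    by (rule measure_Int_set_pmf[symmetric])
  also have "\<dots> \<le> measure_pmf.prob J {(w, u, v). info_dens_cond PW PU ch w u v - info_dens_src PW w > \<tau>}"
  proof (rule measure_pmf.finite_measure_mono)
    show "A \<inter> set_pmf J \<subseteq> {(w, u, v). info_dens_cond PW PU ch w u v - info_dens_src PW w > \<tau>}"
      using info_density_gt_if_atypical unfolding J_def A_def by blast
  qed simp
  finally show ?thesis unfolding J_def by simp
qed

lemma trunc_out_le_induced_out:
  assumes "finite F"
  shows "trunc_out F \<kappa> v c \<le> pmf (induced_out PW ch c) v"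
proof -
  have "ennreal (trunc_out F \<kappa> v c) = (\<Sum>w\<in>F. ennreal (typical_weight \<kappa> v w (c w)))"
    unfolding trunc_out_def by (rule sum_ennreal[symmetric]) (simp add: typical_weight_nonneg)
  also have "\<dots> = (\<Sum>w\<in>F. ennreal (if typical \<kappa> w (c w) v then pmf (ch w (c w)) v else 0) * pmf PW w)"
    by (rule sum.cong) (auto simp: typical_weight_def ennreal_mult' mult.commute)
  also have "\<dots> = (\<integral>\<^sup>+ w. (if w \<in> F then ennreal (if typical \<kappa> w (c w) v then pmf (ch w (c w)) v else 0) else 0) \<partial>PW)"
    by (rule nn_integral_pmf_finite_support[OF assms, symmetric])
  also have "\<dots> \<le> (\<integral>\<^sup>+ w. ennreal (pmf (ch w (c w)) v) \<partial>PW)"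
    by (rule nn_integral_mono) auto
  also have "\<dots> = ennreal (pmf (induced_out PW ch c) v)"
    by (rule pmf_induced_out[symmetric])
  finally show ?thesis by (simp add: ennreal_le_iff)
qed

lemma tv_dist_le_trunc_deviation:
  assumes F: "finite F" and Vs: "finite Vs"
  shows "tv_dist (induced_out PW ch c) (target_out PW PU ch)
    \<le> (\<Sum>v\<in>Vs. \<bar>trunc_out F \<kappa> v c - trunc_mean F \<kappa> v\<bar>)
      + (\<Sum>v\<in>Vs. measure_pmf.prob (joint_pmf PW PU ch) (atypical_event F \<kappa> v))
      + measure_pmf.prob (target_out PW PU ch) (- Vs)"
proof -
  have "max 0 (pmf (target_out PW PU ch) v - pmf (induced_out PW ch c) v)
      \<le> \<bar>trunc_out F \<kappa> v c - trunc_mean F \<kappa> v\<bar> + measure_pmf.prob (joint_pmf PW PU ch) (atypical_event F \<kappa> v)"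
    for v
    using trunc_out_le_induced_out[OF F, of \<kappa> v c] pmf_target_out_split[OF F, of v \<kappa>]
      measure_nonneg[of "joint_pmf PW PU ch" "atypical_event F \<kappa> v"] by linarith
  then have "(\<Sum>v\<in>Vs. max 0 (pmf (target_out PW PU ch) v - pmf (induced_out PW ch c) v))
      \<le> (\<Sum>v\<in>Vs. \<bar>trunc_out F \<kappa> v c - trunc_mean F \<kappa> v\<bar>)
        + (\<Sum>v\<in>Vs. measure_pmf.prob (joint_pmf PW PU ch) (atypical_event F \<kappa> v))"
    by (simp add: sum.distrib[symmetric] sum_mono)
  then show ?thesis
    using tv_dist_le_finite_deficit[OF Vs, of "induced_out PW ch c" "target_out PW PU ch"] by linarith
qed

lemma expected_trunc_deviation_le:
  assumes F: "finite F" and \<kappa>: "0 \<le> \<kappa>"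
  shows "(\<integral>\<^sup>+ c. ennreal \<bar>trunc_out F \<kappa> v c - trunc_mean F \<kappa> v\<bar> \<partial>codebook_measure PU)
    \<le> ennreal (sqrt \<kappa> * pmf (target_out PW PU ch) v)"
proof -
  let ?q = "pmf (target_out PW PU ch) v"
  have "(\<integral>\<^sup>+ c. ennreal \<bar>trunc_out F \<kappa> v c - trunc_mean F \<kappa> v\<bar> \<partial>codebook_measure PU)
      \<le> ennreal (sqrt (\<kappa> * ?q * trunc_mean F \<kappa> v))"
    unfolding trunc_out_def trunc_mean_def
    by (rule mean_deviation_sum_codebook[OF F typical_weight_nonneg typical_weight_le[OF \<kappa>]])
  also have "sqrt (\<kappa> * ?q * trunc_mean F \<kappa> v) \<le> sqrt (\<kappa> * ?q * ?q)"
    using pmf_target_out_split[OF F, of v \<kappa>] \<kappa> trunc_mean_nonneg[of F \<kappa> v]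
      measure_nonneg[of "joint_pmf PW PU ch" "atypical_event F \<kappa> v"]
    by (intro real_sqrt_le_mono mult_left_mono) simp_all
  also have "\<dots> = sqrt \<kappa> * ?q"
    using \<kappa> by (simp add: real_sqrt_mult)
  finally show ?thesis by (simp add: ennreal_leI)
qed

end

lemma nn_integral_sum_plus_const:
  assumes "prob_space M" and "\<And>i. i \<in> I \<Longrightarrow> f i \<in> borel_measurable M"
  shows "(\<integral>\<^sup>+ x. (\<Sum>i\<in>I. f i x) + C \<partial>M) = (\<Sum>i\<in>I. \<integral>\<^sup>+ x. f i x \<partial>M) + C"
proof -
  have "(\<integral>\<^sup>+ x. (\<Sum>i\<in>I. f i x) + C \<partial>M) = (\<integral>\<^sup>+ x. (\<Sum>i\<in>I. f i x) \<partial>M) + (\<integral>\<^sup>+ x. C \<partial>M)"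
    using assms(2) by (intro nn_integral_add borel_measurable_sum) auto
  also have "\<dots> = (\<Sum>i\<in>I. \<integral>\<^sup>+ x. f i x \<partial>M) + C"
    using assms(2) prob_space.emeasure_space_1[OF assms(1)] by (simp add: nn_integral_sum)
  finally show ?thesis .
qed

lemma one_shot_soft_covering:
  fixes PW :: "'w pmf" and PU :: "'w \<Rightarrow> 'u pmf" and ch :: "'w \<Rightarrow> 'u \<Rightarrow> 'v pmf"
  assumes \<delta>: "0 < \<delta>"
  shows "(\<integral>\<^sup>+ c. ennreal (tv_dist (induced_out PW ch c) (target_out PW PU ch)) \<partial>codebook_measure PU)
     \<le> ennreal (measure_pmf.prob (joint_pmf PW PU ch)
          {(w, u, v). info_dens_cond PW PU ch w u v - info_dens_src PW w > \<tau>} + 2 * \<delta> + sqrt (2 powr \<tau>))"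
proof -
  define \<kappa> :: real where "\<kappa> = 2 powr \<tau>"
  have \<kappa>_nonneg: "0 \<le> \<kappa>" unfolding \<kappa>_def by simp
  define \<epsilon> where "\<epsilon> = measure_pmf.prob (joint_pmf PW PU ch)
    {(w, u, v). info_dens_cond PW PU ch w u v - info_dens_src PW w > \<tau>}"
  define Q where "Q = target_out PW PU ch"
  obtain F where F: "finite F" "measure_pmf.prob PW (- F) \<le> \<delta>"
    using finite_set_large_mass[OF \<delta>] by blast
  obtain Vs where Vs: "finite Vs" "measure_pmf.prob Q (- Vs) \<le> \<delta>"
    using finite_set_large_mass[OF \<delta>] by blast
  define D where "D = (\<lambda>v c. ennreal \<bar>trunc_out PW PU ch F \<kappa> v c - trunc_mean PW PU ch F \<kappa> v\<bar>)"
  define C where "C = (\<Sum>v\<in>Vs. measure_pmf.prob (joint_pmf PW PU ch) (atypical_event PW PU ch F \<kappa> v))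
    + measure_pmf.prob Q (- Vs)"
  have C_nonneg: "0 \<le> C" unfolding C_def by (simp add: sum_nonneg)
  have C_le: "C \<le> \<epsilon> + 2 * \<delta>"
    using atypical_mass_le[OF Vs(1), of PW PU ch F \<tau>] F(2) Vs(2) unfolding C_def \<epsilon>_def \<kappa>_def by simp
  have D_measurable: "D v \<in> borel_measurable (codebook_measure PU)" for v
    unfolding D_def trunc_out_def codebook_measure_def by (rule borel_measurable_abs_coordinate_sum) simp
  have pointwise: "ennreal (tv_dist (induced_out PW ch c) Q) \<le> (\<Sum>v\<in>Vs. D v c) + ennreal C" for c
  proof -
    have "tv_dist (induced_out PW ch c) Q
        \<le> (\<Sum>v\<in>Vs. \<bar>trunc_out PW PU ch F \<kappa> v c - trunc_mean PW PU ch F \<kappa> v\<bar>) + C"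
      using tv_dist_le_trunc_deviation[OF F(1) Vs(1), of PW ch c PU \<kappa>] unfolding C_def Q_def by linarith
    then show ?thesis
      using C_nonneg by (subst (asm) ennreal_le_iff[symmetric]) (auto simp: D_def ennreal_plus sum_nonneg)
  qed
  have "(\<integral>\<^sup>+ c. ennreal (tv_dist (induced_out PW ch c) Q) \<partial>codebook_measure PU)
      \<le> (\<integral>\<^sup>+ c. (\<Sum>v\<in>Vs. D v c) + ennreal C \<partial>codebook_measure PU)"
    by (intro nn_integral_mono pointwise)
  also have "\<dots> = (\<Sum>v\<in>Vs. \<integral>\<^sup>+ c. D v c \<partial>codebook_measure PU) + ennreal C"
    using prob_space_codebook D_measurable by (rule nn_integral_sum_plus_const)
  also have "\<dots> \<le> (\<Sum>v\<in>Vs. ennreal (sqrt \<kappa> * pmf Q v)) + ennreal C"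
    unfolding D_def Q_def \<kappa>_def
    by (intro add_mono sum_mono expected_trunc_deviation_le F(1) order_refl) simp
  also have "\<dots> = ennreal (sqrt \<kappa> * measure_pmf.prob Q Vs + C)"
  proof -
    have "0 \<le> sqrt \<kappa> * pmf Q v" for v using \<kappa>_nonneg by simp
    then show ?thesis
      using C_nonneg Vs(1) by (simp add: sum_nonneg sum_ennreal sum_distrib_left measure_measure_pmf_finite)
  qed
  also have "\<dots> \<le> ennreal (\<epsilon> + 2 * \<delta> + sqrt \<kappa>)"
    using C_le \<kappa>_nonneg mult_left_le[OF measure_pmf.prob_le_1, of "sqrt \<kappa>" Q Vs]
    by (intro ennreal_leI) simp
  finally show ?thesis unfolding \<epsilon>_def \<kappa>_def Q_def .
qed

lemma ennreal_tendsto_zeroI: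
  fixes f :: "nat \<Rightarrow> ennreal"
  assumes "\<And>e. 0 < e \<Longrightarrow> eventually (\<lambda>n. f n \<le> ennreal e) sequentially"
  shows "f \<longlonglongrightarrow> 0"
proof (rule order_tendstoI)
  fix u :: ennreal assume "0 < u"
  then obtain r where r: "0 < r" "r < u" using dense by blast
  have "r < \<top>" using r(2) top_greatest by (rule order.strict_trans2)
  with r(1) have "r = ennreal (enn2real r)" "0 < enn2real r"
    by (auto simp: enn2real_positive_iff)
  with assms[of "enn2real r"] r(2) show "eventually (\<lambda>n. f n < u) sequentially"
    by (auto elim: eventually_mono)
qed simp

theorem mainTheorem11:
  fixes PW :: "nat \<Rightarrow> 'w::countable pmf"
    and PU :: "nat \<Rightarrow> 'w \<Rightarrow> 'u::countable pmf"
    and ch :: "nat \<Rightarrow> 'w \<Rightarrow> 'u \<Rightarrow> 'v::countable pmf"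
  assumes hyp: "\<And>\<tau>::real. (\<lambda>n. measure_pmf.prob (joint_pmf (PW n) (PU n) (ch n))
        {(w, u, v). info_dens_cond (PW n) (PU n) (ch n) w u v - info_dens_src (PW n) w > \<tau>})
      \<longlonglongrightarrow> 0"
  shows "(\<lambda>n. \<integral>\<^sup>+ c. ennreal (tv_dist (induced_out (PW n) (ch n) c)
                                    (target_out (PW n) (PU n) (ch n)))
              \<partial>(codebook_measure (PU n))) \<longlonglongrightarrow> 0"
proof (rule ennreal_tendsto_zeroI)
  fix e :: real assume e: "0 < e"
  define \<tau> where "\<tau> = log 2 ((e / 3)^2)"
  have threshold: "sqrt (2 powr \<tau>) = e / 3" unfolding \<tau>_def using e by simp
  have "eventually (\<lambda>n. measure_pmf.prob (joint_pmf (PW n) (PU n) (ch n))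
      {(w, u, v). info_dens_cond (PW n) (PU n) (ch n) w u v - info_dens_src (PW n) w > \<tau>} < e / 3) sequentially"
    using order_tendstoD(2)[OF hyp[of \<tau>], of "e / 3"] e by simp
  then show "eventually (\<lambda>n. (\<integral>\<^sup>+ c. ennreal (tv_dist (induced_out (PW n) (ch n) c)
      (target_out (PW n) (PU n) (ch n))) \<partial>codebook_measure (PU n)) \<le> ennreal e) sequentially"
  proof eventually_elim
    case (elim n)
    from elim threshold
    show ?case by (intro order.trans[OF one_shot_soft_covering[where \<delta>="e / 6" and \<tau>=\<tau>]] ennreal_leI)
       (use e in simp_all)
  qed
qed
end
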